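(* Let $n\ge 1$, let $T$ be a regular tournament on $2n+1$ vertices (every vertex has in-degree and out-degree $n$), and let $G$ be the hairy tournament obtained from $T$ by attaching to each vertex $a$ of $T$ exactly $2n+1$ new vertices, each having exactly one incident edge, directed from $a$ to it. Then $|V(G)|=(2n+2)(2n+1)$ and the minimum size of a quasi-kernel of $G$ is $1+n(2n+1)$.
   Context: Digraphs are finite, without loops and without multiple edges in the same direction. For $V'\subseteq V(G)$, $\Gamma^+(V')$ is the set of out-neighbours of vertices of $V'$ and $\Gamma^+_2(V')=V'\cup\Gamma^+(V')\cup\Gamma^+(\Gamma^+(V'))$. A quasi-kernel is an independent set $Q$ with $\Gamma^+_2(Q)=V(G)$. *)

theory Defs
  imports Main
begin

definition digraph :: "'v set \<Rightarrow> ('v \<Rightarrow> 'v \<Rightarrow> bool) \<Rightarrow> bool" where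
  "digraph V E \<longleftrightarrow> finite V \<and> (\<forall>x y. E x y \<longrightarrow> x \<in> V \<and> y \<in> V) \<and> (\<forall>x. \<not> E x x)"

definition out_nbrs :: "'v set \<Rightarrow> ('v \<Rightarrow> 'v \<Rightarrow> bool) \<Rightarrow> 'v set \<Rightarrow> 'v set" where
  "out_nbrs V E S = {y \<in> V. \<exists>x\<in>S. E x y}"

definition Gamma2 :: "'v set \<Rightarrow> ('v \<Rightarrow> 'v \<Rightarrow> bool) \<Rightarrow> 'v set \<Rightarrow> 'v set" where
  "Gamma2 V E S = S \<union> out_nbrs V E S \<union> out_nbrs V E (out_nbrs V E S)"

definition independent :: "'v set \<Rightarrow> ('v \<Rightarrow> 'v \<Rightarrow> bool) \<Rightarrow> 'v set \<Rightarrow> bool" where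
  "independent V E Q \<longleftrightarrow> Q \<subseteq> V \<and> (\<forall>x\<in>Q. \<forall>y\<in>Q. \<not> E x y)"

definition quasi_kernel :: "'v set \<Rightarrow> ('v \<Rightarrow> 'v \<Rightarrow> bool) \<Rightarrow> 'v set \<Rightarrow> bool" where
  "quasi_kernel V E Q \<longleftrightarrow> independent V E Q \<and> Gamma2 V E Q = V"

definition tournament :: "'v set \<Rightarrow> ('v \<Rightarrow> 'v \<Rightarrow> bool) \<Rightarrow> bool" where
  "tournament V E \<longleftrightarrow> digraph V E \<and>
     (\<forall>x\<in>V. \<forall>y\<in>V. x \<noteq> y \<longrightarrow> (E x y \<longleftrightarrow> \<not> E y x))"

definition regular_digraph :: "'v set \<Rightarrow> ('v \<Rightarrow> 'v \<Rightarrow> bool) \<Rightarrow> nat \<Rightarrow> bool" where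
  "regular_digraph V E k \<longleftrightarrow>
     (\<forall>v\<in>V. card {u\<in>V. E v u} = k \<and> card {u\<in>V. E u v} = k)"

text \<open>Hairy tournament: vertex a of T becomes Inl a; the m new pendant vertices attached
  to a are Inr (a, i) for i < m, each with the single arc Inl a \<rightarrow> Inr (a, i).\<close>
definition hairy_verts :: "'a set \<Rightarrow> nat \<Rightarrow> ('a + 'a \<times> nat) set" where
  "hairy_verts V m = Inl ` V \<union> {Inr (a, i) | a i. a \<in> V \<and> i < m}"

fun hairy_arcs :: "('a \<Rightarrow> 'a \<Rightarrow> bool) \<Rightarrow> ('a + 'a \<times> nat) \<Rightarrow> ('a + 'a \<times> nat) \<Rightarrow> bool" where
  "hairy_arcs E (Inl a) (Inl b) = E a b"
| "hairy_arcs E (Inl a) (Inr (b, i)) = (a = b)"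
| "hairy_arcs E (Inr _) _ = False"

end

theory Submission
  imports Defs
begin

text \<open>A quasi-kernel Q of the hairy tournament must contain a vertex a of T, since nothing
  reaches vertices of T from the hairs. The hairs of an in-neighbour u of a can then only be
  dominated by Q itself: Inl u and every in-neighbour b of u in T are adjacent to a (b = a is
  excluded because a and u are joined by the arc u \<rightarrow> a), which independence forbids.
  So Q contains a and the n(2n+1) hairs of its in-neighbours. Conversely this set is a
  quasi-kernel, because in a regular tournament every arc w \<rightarrow> a lies on a directed
  triangle, so every vertex is within distance two of a.\<close>

lemma Gamma2_base: "x \<in> S \<Longrightarrow> x \<in> Gamma2 V E S"
  unfolding Gamma2_def by blast

lemma Gamma2_step1: "s \<in> S \<Longrightarrow> E s x \<Longrightarrow> x \<in> V \<Longrightarrow> x \<in> Gamma2 V E S"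
  unfolding Gamma2_def out_nbrs_def by blast

lemma Gamma2_step2:
  "s \<in> S \<Longrightarrow> E s y \<Longrightarrow> y \<in> V \<Longrightarrow> E y x \<Longrightarrow> x \<in> V \<Longrightarrow> x \<in> Gamma2 V E S"
  unfolding Gamma2_def out_nbrs_def by blast

lemma Gamma2_subset: "S \<subseteq> V \<Longrightarrow> Gamma2 V E S \<subseteq> V"
  unfolding Gamma2_def out_nbrs_def by blast

lemma quasi_kernel_subset: "quasi_kernel V E Q \<Longrightarrow> Q \<subseteq> V"
  unfolding quasi_kernel_def independent_def by blast

lemma hairy_arcs_iff:
  "hairy_arcs E x y \<longleftrightarrow>
     (\<exists>a b. x = Inl a \<and> y = Inl b \<and> E a b) \<or> (\<exists>a i. x = Inl a \<and> y = Inr (a, i))"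
  by (cases x; cases y) auto

lemma hairy_verts_eq: "hairy_verts V m = Inl ` V \<union> Inr ` (V \<times> {..<m})"
  unfolding hairy_verts_def by auto

lemma finite_hairy_verts: "finite V \<Longrightarrow> finite (hairy_verts V m)"
  by (simp add: hairy_verts_eq)

lemma card_hairy_verts:
  assumes "finite V"
  shows "card (hairy_verts V m) = card V * (m + 1)"
proof -
  have "card (hairy_verts V m) =
      card (Inl ` V :: ('a + 'a \<times> nat) set) + card (Inr ` (V \<times> {..<m}) :: ('a + 'a \<times> nat) set)"
    unfolding hairy_verts_eq by (rule card_Un_disjoint) (use assms in auto)
  then show ?thesis
    by (simp add: card_image card_cartesian_product)
qed

definition in_hairs :: "'a set \<Rightarrow> ('a \<Rightarrow> 'a \<Rightarrow> bool) \<Rightarrow> nat \<Rightarrow> 'a \<Rightarrow> ('a + 'a \<times> nat) set" where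
  "in_hairs V E m a = Inr ` ({u \<in> V. E u a} \<times> {..<m})"

lemma in_hairs_subset_hairy_verts: "in_hairs V E m a \<subseteq> hairy_verts V m"
  unfolding in_hairs_def hairy_verts_eq by auto

lemma card_in_hairs_star:
  assumes "finite V"
  shows "card (insert (Inl a) (in_hairs V E m a)) = 1 + card {u \<in> V. E u a} * m"
  using assms by (simp add: in_hairs_def card_image card_cartesian_product image_iff)

lemma tournament_arc_iff:
  "tournament V E \<Longrightarrow> x \<in> V \<Longrightarrow> y \<in> V \<Longrightarrow> x \<noteq> y \<Longrightarrow> E x y \<longleftrightarrow> \<not> E y x"
  unfolding tournament_def by blast

lemma tournament_loopless: "tournament V E \<Longrightarrow> \<not> E x x"
  unfolding tournament_def digraph_def by blast

lemma tournament_arc_in_V: "tournament V E \<Longrightarrow> E x y \<Longrightarrow> x \<in> V \<and> y \<in> V"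
  unfolding tournament_def digraph_def by blast

lemma tournament_finite: "tournament V E \<Longrightarrow> finite V"
  unfolding tournament_def digraph_def by blast

text \<open>If no such z existed, w would dominate v together with all out-neighbours of v,
  giving w a larger out-degree than v.\<close>

lemma regular_tournament_arc_in_triangle:
  assumes T: "tournament V E" and R: "regular_digraph V E k"
    and wv: "E w v"
  shows "\<exists>z\<in>V. E v z \<and> E z w"
proof (rule ccontr)
  assume no_triangle: "\<not> (\<exists>z\<in>V. E v z \<and> E z w)"
  have v: "v \<in> V" and w: "w \<in> V" using tournament_arc_in_V[OF T wv] by auto
  have "insert v {z \<in> V. E v z} \<subseteq> {z \<in> V. E w z}"
  proof
    fix z assume z: "z \<in> insert v {z \<in> V. E v z}"
    show "z \<in> {z \<in> V. E w z}"
    proof (cases "z = v")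
      case False
      then have zV: "z \<in> V" and vz: "E v z" using z by auto
      have "z \<noteq> w" using vz wv tournament_arc_iff[OF T v w] tournament_loopless[OF T] by auto
      then show ?thesis using no_triangle zV vz tournament_arc_iff[OF T w zV] by auto
    qed (use wv v in simp)
  qed
  then have "card (insert v {z \<in> V. E v z}) \<le> card {z \<in> V. E w z}"
    using tournament_finite[OF T] by (intro card_mono) auto
  moreover have "v \<notin> {z \<in> V. E v z}" using tournament_loopless[OF T] by simp
  ultimately show False
    using R v w tournament_finite[OF T] unfolding regular_digraph_def by simp
qed

lemma quasi_kernel_hairy_contains_star:
  assumes T: "tournament V E" and "V \<noteq> {}"
    and qk: "quasi_kernel (hairy_verts V m) (hairy_arcs E) Q"
  shows "\<exists>a\<in>V. insert (Inl a) (in_hairs V E m a) \<subseteq> Q"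
proof -
  let ?H = "hairy_verts V m"
  have QH: "Q \<subseteq> ?H" and indep: "\<And>x y. x \<in> Q \<Longrightarrow> y \<in> Q \<Longrightarrow> \<not> hairy_arcs E x y"
    and dom: "Gamma2 ?H (hairy_arcs E) Q = ?H"
    using qk unfolding quasi_kernel_def independent_def by auto
  obtain v where "v \<in> V" using \<open>V \<noteq> {}\<close> by blast
  then have "Inl v \<in> Gamma2 ?H (hairy_arcs E) Q" using dom by (simp add: hairy_verts_eq)
  then obtain a where a: "Inl a \<in> Q"
    unfolding Gamma2_def out_nbrs_def hairy_arcs_iff by blast
  have aV: "a \<in> V" using a QH by (auto simp: hairy_verts_eq)
  have "in_hairs V E m a \<subseteq> Q"
  proof
    fix y assume y: "y \<in> in_hairs V E m a"
    then obtain u i where yu: "y = Inr (u, i)" and uV: "u \<in> V" and ua: "E u a"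
      by (auto simp: in_hairs_def)
    have "y \<in> Gamma2 ?H (hairy_arcs E) Q"
      using dom y in_hairs_subset_hairy_verts[of V E m a] by blast
    then consider "y \<in> Q" | "Inl u \<in> Q" | b where "Inl b \<in> Q" "E b u"
      unfolding Gamma2_def out_nbrs_def hairy_arcs_iff yu by auto
    then show "y \<in> Q"
    proof cases
      case 2
      then show ?thesis using indep[OF 2 a] ua by simp
    next
      case 3
      have "b \<in> V" using tournament_arc_in_V[OF T 3(2)] by blast
      moreover have "b \<noteq> a"
        using 3(2) ua uV aV tournament_arc_iff[OF T aV uV] tournament_loopless[OF T] by auto
      moreover have "\<not> E b a" "\<not> E a b" using indep[OF 3(1) a] indep[OF a 3(1)] by auto
      ultimately show ?thesis using tournament_arc_iff[OF T aV] by blast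
    qed
  qed
  then show ?thesis using a aV by blast
qed

lemma quasi_kernel_hairy_star:
  assumes T: "tournament V E" and R: "regular_digraph V E k" and aV: "a \<in> V"
  shows "quasi_kernel (hairy_verts V m) (hairy_arcs E) (insert (Inl a) (in_hairs V E m a))"
    (is "quasi_kernel ?H _ ?Q")
proof -
  have QH: "?Q \<subseteq> ?H"
    using aV in_hairs_subset_hairy_verts[of V E m a] by (simp add: hairy_verts_eq)
  have "independent ?H (hairy_arcs E) ?Q"
    using QH tournament_loopless[OF T]
    by (auto simp: independent_def in_hairs_def hairy_arcs_iff)
  moreover have "?H \<subseteq> Gamma2 ?H (hairy_arcs E) ?Q"
  proof
    fix x assume xH: "x \<in> ?H"
    then obtain w where w: "w \<in> V" and x: "x = Inl w \<or> (\<exists>i<m. x = Inr (w, i))"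
      by (auto simp: hairy_verts_eq)
    have aQ: "Inl a \<in> ?Q" by simp
    have wH: "Inl w \<in> ?H" using w by (simp add: hairy_verts_eq)
    consider "w = a" | "E a w" | "E w a" using tournament_arc_iff[OF T aV w] by blast
    then show "x \<in> Gamma2 ?H (hairy_arcs E) ?Q"
    proof cases
      case 1
      from x show ?thesis
      proof
        assume "x = Inl w"
        then show ?thesis using 1 Gamma2_base[OF aQ] by simp
      next
        assume "\<exists>i<m. x = Inr (w, i)"
        then show ?thesis using 1 xH by (auto intro: Gamma2_step1[OF aQ])
      qed
    next
      case 2
      from x show ?thesis
      proof
        assume "x = Inl w"
        then show ?thesis using 2 wH by (auto intro: Gamma2_step1[OF aQ])
      next
        assume "\<exists>i<m. x = Inr (w, i)"
        then show ?thesis using 2 xH wH by (auto intro: Gamma2_step2[OF aQ _ wH])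
      qed
    next
      case 3
      then obtain z where z: "z \<in> V" "E a z" "E z w"
        using regular_tournament_arc_in_triangle[OF T R] by blast
      have "Inl z \<in> ?H" using z by (simp add: hairy_verts_eq)
      have "Inl w \<in> Gamma2 ?H (hairy_arcs E) ?Q"
        by (rule Gamma2_step2[OF aQ _ \<open>Inl z \<in> ?H\<close> _ wH]) (use z in simp_all)
      from x show ?thesis
      proof
        assume "x = Inl w"
        with \<open>Inl w \<in> Gamma2 ?H (hairy_arcs E) ?Q\<close> show ?thesis by simp
      next
        assume "\<exists>i<m. x = Inr (w, i)"
        then show ?thesis using 3 w by (auto simp: in_hairs_def intro: Gamma2_base)
      qed
    qed
  qed
  ultimately show ?thesis
    using Gamma2_subset[OF QH] unfolding quasi_kernel_def by blast
qed

lemma Min_card_eqI: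
  assumes "finite U" and "\<And>Q. P Q \<Longrightarrow> Q \<subseteq> U"
    and "P Q\<^sub>0" and "card Q\<^sub>0 = k" and "\<And>Q. P Q \<Longrightarrow> k \<le> card Q"
  shows "Min {card Q | Q. P Q} = k"
proof (rule Min_eqI)
  have "{card Q | Q. P Q} \<subseteq> card ` Pow U" using assms(2) by blast
  then show "finite {card Q | Q. P Q}" using assms(1) finite_subset by blast
qed (use assms in auto)

theorem mainTheorem6:
  fixes V :: "'a set" and E :: "'a \<Rightarrow> 'a \<Rightarrow> bool" and n :: nat
  assumes "n \<ge> 1"
    and "tournament V E"
    and "card V = 2 * n + 1"
    and "regular_digraph V E n"
  shows "card (hairy_verts V (2 * n + 1)) = (2 * n + 2) * (2 * n + 1)
    \<and> Min {card Q | Q. quasi_kernel (hairy_verts V (2 * n + 1)) (hairy_arcs E) Q}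
        = 1 + n * (2 * n + 1)"
proof -
  let ?m = "2 * n + 1"
  let ?H = "hairy_verts V ?m"
  have fin: "finite V" using tournament_finite[OF assms(2)] .
  have star_card: "card (insert (Inl a) (in_hairs V E ?m a)) = 1 + n * ?m" if "a \<in> V" for a
    using card_in_hairs_star[OF fin] assms(4) that unfolding regular_digraph_def by simp
  have "V \<noteq> {}" using assms(3) by auto
  then obtain a where a: "a \<in> V" by blast
  have lower: "1 + n * ?m \<le> card Q" if qk: "quasi_kernel ?H (hairy_arcs E) Q" for Q
  proof -
    obtain b where b: "b \<in> V" and star: "insert (Inl b) (in_hairs V E ?m b) \<subseteq> Q"
      using quasi_kernel_hairy_contains_star[OF assms(2) \<open>V \<noteq> {}\<close> qk] by blast
    have "finite Q"
      using finite_subset[OF quasi_kernel_subset[OF qk] finite_hairy_verts[OF fin]] .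
    then show ?thesis using card_mono[OF _ star] star_card[OF b] by simp
  qed
  have "Min {card Q | Q. quasi_kernel ?H (hairy_arcs E) Q} = 1 + n * ?m"
    using Min_card_eqI[where P = "quasi_kernel ?H (hairy_arcs E)", OF finite_hairy_verts[OF fin]
        quasi_kernel_subset quasi_kernel_hairy_star[OF assms(2,4) a] star_card[OF a] lower] .
  then show ?thesis using card_hairy_verts[OF fin, of ?m] assms(3) by simp
qed

end
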